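(* In the setting of the context, suppose Assumption (A1) holds, $\lambda=n^{\lambda_0-\widehat\pi_{uc}/2}$ with fixed $\lambda_0>0$ and $\widehat\pi_{uc}=n^{-1}\sum_{i=1}^n\delta_i$, and $\pi_\alpha\to0$. Then $\lambda=o_P\big(n^{2\lambda_0-\pi_{uc}/2}\big)$.
   Context: For each $n$ we observe $(Y_i,X_i,\delta_i)$, $i=1,\dots,n$, with $X_i\in\mathbb{R}^p$, $T_i=X_i^\top\beta+\alpha_i+\xi_i$, $Y_i=\min(T_i,C_i)$, $\delta_i=\mathbb{1}\{T_i\le C_i\}$; the distribution of $(X_i,\xi_i)$ does not depend on $n$, that of $\alpha_i$ may. $\pi_\alpha=\mathbb{P}(\alpha_i\neq0)$, $\tilde T_i=T_i-\alpha_i$, $\tilde\delta_i=\mathbb{1}\{\tilde T_i\le C_i\}$, $\pi_{uc}=\mathbb{P}(\tilde\delta_1=1)$, $\|\xi\|_\infty=\max_i|\xi_i|$. Assumption (A1): (i) $\{C_i,X_i,\xi_i\}_i$ are independent and, for fixed $n$, identically distributed; (ii) $\mathbb{E}[X_i\xi_i]=0$; (iii) $\mathbb{E}[X_iX_i^\top]$ exists and is positive definite; (iv) for all $t>0$, $\|\xi\|_\infty=o_P(n^t)$. *)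

theory Defs
  imports "HOL-Probability.Probability"
begin

definition conv_prob_zero :: "(nat \<Rightarrow> 'a measure) \<Rightarrow> (nat \<Rightarrow> 'a \<Rightarrow> real) \<Rightarrow> bool" where
  "conv_prob_zero M Z \<longleftrightarrow>
     (\<forall>e>0. (\<lambda>n. measure (M n) {w \<in> space (M n). \<bar>Z n w\<bar> > e}) \<longlonglongrightarrow> 0)"

definition little_oP :: "(nat \<Rightarrow> 'a measure) \<Rightarrow> (nat \<Rightarrow> 'a \<Rightarrow> real) \<Rightarrow> (nat \<Rightarrow> real) \<Rightarrow> bool" where
  "little_oP M Z r \<longleftrightarrow> conv_prob_zero M (\<lambda>n w. Z n w / r n)"

text \<open>Censoring indicator delta_i = 1{T_i <= C_i}, T_i = X_i' beta + alpha_i + xi_i.\<close>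
definition delta_ind :: "real ^ 'p \<Rightarrow> real \<Rightarrow> real \<Rightarrow> real \<Rightarrow> real ^ 'p \<Rightarrow> real" where
  "delta_ind x a e c beta = (if x \<bullet> beta + a + e \<le> c then 1 else 0)"

text \<open>hat pi_uc = n^{-1} sum_{i=1}^n delta_i (observations indexed 0..n-1).\<close>
definition pihat_uc ::
  "(nat \<Rightarrow> nat \<Rightarrow> 'a \<Rightarrow> real ^ 'p) \<Rightarrow> (nat \<Rightarrow> nat \<Rightarrow> 'a \<Rightarrow> real) \<Rightarrow> (nat \<Rightarrow> nat \<Rightarrow> 'a \<Rightarrow> real)
   \<Rightarrow> (nat \<Rightarrow> nat \<Rightarrow> 'a \<Rightarrow> real) \<Rightarrow> real ^ 'p \<Rightarrow> nat \<Rightarrow> 'a \<Rightarrow> real" where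
  "pihat_uc X alpha xi C beta n w =
     (\<Sum>i<n. delta_ind (X n i w) (alpha n i w) (xi n i w) (C n i w) beta) / real n"

text \<open>pi_uc = P(tilde delta_1 = 1), tilde T_1 = X_1' beta + xi_1 (first observation = index 0).\<close>
definition pi_uc ::
  "(nat \<Rightarrow> 'a measure) \<Rightarrow> (nat \<Rightarrow> nat \<Rightarrow> 'a \<Rightarrow> real ^ 'p) \<Rightarrow> (nat \<Rightarrow> nat \<Rightarrow> 'a \<Rightarrow> real)
   \<Rightarrow> (nat \<Rightarrow> nat \<Rightarrow> 'a \<Rightarrow> real) \<Rightarrow> real ^ 'p \<Rightarrow> nat \<Rightarrow> real" where
  "pi_uc M X xi C beta n =
     measure (M n) {w \<in> space (M n). X n 0 w \<bullet> beta + xi n 0 w \<le> C n 0 w}"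

definition pi_alpha :: "(nat \<Rightarrow> 'a measure) \<Rightarrow> (nat \<Rightarrow> nat \<Rightarrow> 'a \<Rightarrow> real) \<Rightarrow> nat \<Rightarrow> real" where
  "pi_alpha M alpha n = measure (M n) {w \<in> space (M n). alpha n 0 w \<noteq> 0}"

end

theory Submission
  imports Defs
begin

(* Let S_n be the fraction of indices with X_i' beta + xi_i <= C_i, i.e. the uncensored
   frequency of the outlier-free model, and A_n the fraction of indices with alpha_i <> 0.
   Switching on alpha_i changes only the i-th indicator, so pihat_uc >= S_n - A_n.
   S_n is a mean of n i.i.d. Bernoulli(pi_uc) variables, so S_n -> pi_uc in probability
   by Chebyshev; E A_n = pi_alpha -> 0, so A_n -> 0 in probability by Markov. Off these two
   events pi_uc - pihat_uc < lambda0, and then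
   n^(lambda0 - pihat_uc/2) / n^(2 lambda0 - pi_uc/2) = n^((pi_uc - pihat_uc)/2 - lambda0)
   is at most n^(-lambda0/2). Only the independence and identical distribution of
   (C_i, X_i, xi_i) and pi_alpha -> 0 are used. *)

lemma (in prob_space) expectation_square_sum_le:
  fixes Y :: "nat \<Rightarrow> 'a \<Rightarrow> real"
  assumes indep: "indep_vars (\<lambda>_. borel) Y {..<n}"
    and meas: "\<And>i. i < n \<Longrightarrow> Y i \<in> borel_measurable M"
    and bounded: "\<And>i w. i < n \<Longrightarrow> \<bar>Y i w\<bar> \<le> 1"
    and centred: "\<And>i. i < n \<Longrightarrow> expectation (Y i) = 0"
  shows "expectation (\<lambda>w. (\<Sum>i<n. Y i w)\<^sup>2) \<le> real n"
proof -
  have int_prod: "integrable M (\<lambda>w. Y i w * Y j w)" if "i < n" "j < n" for i j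
  proof (rule integrable_const_bound[where B=1])
    show "AE w in M. norm (Y i w * Y j w) \<le> 1"
      using bounded[OF that(1)] bounded[OF that(2)] by (auto simp: abs_mult intro!: mult_le_one)
  qed (use that meas in auto)
  have off_diagonal: "expectation (\<lambda>w. Y i w * Y j w) = 0" if "i < n" "j < n" "i \<noteq> j" for i j
  proof -
    have "indep_vars (\<lambda>_. borel) Y {i, j}"
      using indep_vars_subset[OF indep] that by auto
    moreover have "integrable M (Y k)" if "k \<in> {i, j}" for k
      using that \<open>i < n\<close> \<open>j < n\<close>
      by (intro integrable_const_bound[where B=1]) (use bounded meas in auto)
    ultimately have "expectation (\<lambda>w. \<Prod>k\<in>{i, j}. Y k w) = (\<Prod>k\<in>{i, j}. expectation (Y k))"
      by (intro indep_vars_lebesgue_integral) auto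
    then show ?thesis using that centred by simp
  qed
  have diagonal: "expectation (\<lambda>w. Y i w * Y i w) \<le> 1" if "i < n" for i
  proof -
    have "Y i w * Y i w \<le> 1" for w
      using abs_square_le_1[of "Y i w"] bounded[OF that] by (simp add: power2_eq_square)
    then have "expectation (\<lambda>w. Y i w * Y i w) \<le> expectation (\<lambda>w. 1)"
      using int_prod[OF that that] by (intro integral_mono) auto
    then show ?thesis by (simp add: prob_space)
  qed
  have "expectation (\<lambda>w. (\<Sum>i<n. Y i w)\<^sup>2) = expectation (\<lambda>w. \<Sum>i<n. \<Sum>j<n. Y i w * Y j w)"
    by (simp add: power2_eq_square sum_product)
  also have "\<dots> = (\<Sum>i<n. \<Sum>j<n. expectation (\<lambda>w. Y i w * Y j w))"
    by (subst Bochner_Integration.integral_sum)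
       (auto intro!: Bochner_Integration.integrable_sum sum.cong Bochner_Integration.integral_sum int_prod)
  also have "\<dots> = (\<Sum>i<n. expectation (\<lambda>w. Y i w * Y i w))"
    using off_diagonal by (intro sum.cong refl) (simp add: sum.remove[of "{..<n}"] sum.neutral)
  also have "\<dots> \<le> (\<Sum>i<n. 1)"
    using diagonal by (intro sum_mono) auto
  finally show ?thesis by simp
qed

lemma (in prob_space) prob_mean_deviation_ge_le:
  fixes Z :: "nat \<Rightarrow> 'a \<Rightarrow> 'b::topological_space" and f :: "'b \<Rightarrow> real"
  assumes indep: "indep_vars (\<lambda>_. borel) Z {..<n}"
    and meas: "\<And>i. i < n \<Longrightarrow> Z i \<in> M \<rightarrow>\<^sub>M borel"
    and ident: "\<And>i. i < n \<Longrightarrow> distr M borel (Z i) = distr M borel (Z 0)"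
    and f_meas [measurable]: "f \<in> borel_measurable borel"
    and f_range: "\<And>z. 0 \<le> f z \<and> f z \<le> 1"
    and "n > 0" "e > 0"
  shows "prob {w \<in> space M. e \<le> \<bar>(\<Sum>i<n. f (Z i w)) / n - expectation (\<lambda>w. f (Z 0 w))\<bar>}
           \<le> 1 / (n * e\<^sup>2)"
proof -
  define \<mu> where "\<mu> = expectation (\<lambda>w. f (Z 0 w))"
  define Y where "Y i w = f (Z i w) - \<mu>" for i w
  have Z_meas [measurable]: "Z i \<in> M \<rightarrow>\<^sub>M borel" if "i < n" for i
    using meas that .
  have Y_meas [measurable]: "Y i \<in> borel_measurable M" if "i < n" for i
    unfolding Y_def using that by measurable
  have "0 \<le> \<mu>" "\<mu> \<le> 1"
    unfolding \<mu>_def using f_range prob_space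
    by (auto intro!: integral_nonneg_AE integral_le_const integrable_const_bound[where B=1]
        simp: measurable_compose[OF Z_meas[OF \<open>n > 0\<close>]])
  then have Y_bounded: "\<bar>Y i w\<bar> \<le> 1" for i w
    unfolding Y_def using f_range[of "Z i w"] by auto
  have Y_centred: "expectation (Y i) = 0" if "i < n" for i
  proof -
    have "expectation (\<lambda>w. f (Z i w)) = integral\<^sup>L (distr M borel (Z i)) f"
      using that by (simp add: integral_distr)
    also have "\<dots> = \<mu>"
      unfolding \<mu>_def ident[OF that] using \<open>n > 0\<close> by (simp add: integral_distr)
    finally show ?thesis
      unfolding Y_def using that f_range prob_space
      by (subst Bochner_Integration.integral_diff)
         (auto intro!: integrable_const_bound[where B=1])
  qed
  have Y_indep: "indep_vars (\<lambda>_. borel) Y {..<n}"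
    unfolding Y_def using indep_vars_compose2[OF indep, of "\<lambda>_ z. f z - \<mu>" "\<lambda>_. borel"] by simp
  have mean_bounded: "\<bar>(\<Sum>i<n. Y i w) / n\<bar> \<le> 1" for w
  proof -
    have "\<bar>\<Sum>i<n. Y i w\<bar> \<le> (\<Sum>i<n. 1)"
      by (rule order.trans[OF sum_abs sum_mono]) (use Y_bounded in auto)
    then show ?thesis
      using \<open>n > 0\<close> by (simp add: abs_divide)
  qed
  have "prob {w \<in> space M. e \<le> \<bar>(\<Sum>i<n. Y i w) / n\<bar>} \<le> expectation (\<lambda>w. ((\<Sum>i<n. Y i w) / n)\<^sup>2) / e\<^sup>2"
    using mean_bounded \<open>e > 0\<close>
    by (intro second_moment_method integrable_const_bound[where B=1]) (auto simp: abs_square_le_1)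
  also have "\<dots> = expectation (\<lambda>w. (\<Sum>i<n. Y i w)\<^sup>2) / (n\<^sup>2 * e\<^sup>2)"
    by (simp add: power_divide)
  also have "\<dots> \<le> n / (n\<^sup>2 * e\<^sup>2)"
    using expectation_square_sum_le[OF Y_indep] Y_bounded Y_centred \<open>e > 0\<close>
    by (intro divide_right_mono) auto
  also have "\<dots> = 1 / (n * e\<^sup>2)"
    using \<open>n > 0\<close> by (simp add: power2_eq_square)
  finally show ?thesis
    using \<open>n > 0\<close> by (simp add: Y_def \<mu>_def sum_subtractf diff_divide_distrib)
qed

lemma (in prob_space) prob_frequency_ge_le:
  fixes P :: "nat \<Rightarrow> 'a \<Rightarrow> bool"
  assumes events: "\<And>i. i < n \<Longrightarrow> {w \<in> space M. P i w} \<in> events"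
    and same_prob: "\<And>i. i < n \<Longrightarrow> prob {w \<in> space M. P i w} = prob {w \<in> space M. P 0 w}"
    and "n > 0" "e > 0"
  shows "prob {w \<in> space M. e \<le> (\<Sum>i<n. of_bool (P i w)) / n} \<le> prob {w \<in> space M. P 0 w} / e"
proof -
  note sum_of_bool_eq [simp del]
  have indicator_eq: "of_bool (P i w) = indicator {w \<in> space M. P i w} w" if "w \<in> space M" for i w
    using that by simp
  have int: "integrable M (\<lambda>w. of_bool (P i w) :: real)" if "i < n" for i
    using events[OF that]
    by (subst Bochner_Integration.integrable_cong[OF refl indicator_eq]) (auto simp: less_top[symmetric])
  have "expectation (\<lambda>w. of_bool (P i w)) = prob {w \<in> space M. P 0 w}" if "i < n" for i
    using events[OF that] same_prob[OF that]
    by (simp add: indicator_eq cong: Bochner_Integration.integral_cong)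
  then have "expectation (\<lambda>w. (\<Sum>i<n. of_bool (P i w)) / n) = prob {w \<in> space M. P 0 w}"
    using int \<open>n > 0\<close> by (simp add: Bochner_Integration.integral_sum)
  moreover have "prob {w \<in> space M. e \<le> (\<Sum>i<n. of_bool (P i w)) / n}
      \<le> expectation (\<lambda>w. (\<Sum>i<n. of_bool (P i w)) / n) / e"
    using int \<open>e > 0\<close>
    by (intro integral_Markov_inequality_measure[where A="space M"])
       (auto intro!: Bochner_Integration.integrable_sum AE_I2 sum_nonneg divide_nonneg_nonneg)
  ultimately show ?thesis by simp
qed

lemma weak_law_triangular_array:
  fixes M :: "nat \<Rightarrow> 'a measure" and Z :: "nat \<Rightarrow> nat \<Rightarrow> 'a \<Rightarrow> 'b::topological_space"
    and f :: "'b \<Rightarrow> real"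
  assumes prob: "\<And>n. prob_space (M n)"
    and indep: "\<And>n. prob_space.indep_vars (M n) (\<lambda>_. borel) (Z n) {..<n}"
    and meas: "\<And>n i. i < n \<Longrightarrow> Z n i \<in> M n \<rightarrow>\<^sub>M borel"
    and ident: "\<And>n i. i < n \<Longrightarrow> distr (M n) borel (Z n i) = distr (M n) borel (Z n 0)"
    and f_meas: "f \<in> borel_measurable borel" and f_range: "\<And>z. 0 \<le> f z \<and> f z \<le> 1"
    and "e > 0"
  shows "(\<lambda>n. measure (M n) {w \<in> space (M n).
           e \<le> \<bar>(\<Sum>i<n. f (Z n i w)) / n - (\<integral>w. f (Z n 0 w) \<partial>M n)\<bar>}) \<longlonglongrightarrow> 0"
proof (rule tendsto_sandwich[OF _ _ tendsto_const])
  show "(\<lambda>n. 1 / (n * e\<^sup>2)) \<longlonglongrightarrow> 0"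
    using tendsto_mult_right_zero[OF lim_inverse_n, of "1 / e\<^sup>2"] by (simp add: field_simps)
  show "eventually (\<lambda>n. measure (M n) {w \<in> space (M n).
           e \<le> \<bar>(\<Sum>i<n. f (Z n i w)) / n - (\<integral>w. f (Z n 0 w) \<partial>M n)\<bar>} \<le> 1 / (n * e\<^sup>2)) sequentially"
    using eventually_gt_at_top[of 0]
  proof eventually_elim
    case (elim n)
    interpret prob_space "M n" by (rule prob)
    show ?case
      by (rule prob_mean_deviation_ge_le[OF indep meas ident f_meas f_range elim \<open>e > 0\<close>])
  qed
qed simp

lemma frequency_tendsto_zero_in_probability:
  fixes M :: "nat \<Rightarrow> 'a measure" and P :: "nat \<Rightarrow> nat \<Rightarrow> 'a \<Rightarrow> bool"
  assumes prob: "\<And>n. prob_space (M n)"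
    and events: "\<And>n i. i < n \<Longrightarrow> {w \<in> space (M n). P n i w} \<in> sets (M n)"
    and same_prob: "\<And>n i. i < n \<Longrightarrow>
           measure (M n) {w \<in> space (M n). P n i w} = measure (M n) {w \<in> space (M n). P n 0 w}"
    and lim: "(\<lambda>n. measure (M n) {w \<in> space (M n). P n 0 w}) \<longlonglongrightarrow> 0"
    and "e > 0"
  shows "(\<lambda>n. measure (M n) {w \<in> space (M n). e \<le> (\<Sum>i<n. of_bool (P n i w)) / n}) \<longlonglongrightarrow> 0"
proof (rule tendsto_sandwich[OF _ _ tendsto_const])
  show "(\<lambda>n. measure (M n) {w \<in> space (M n). P n 0 w} / e) \<longlonglongrightarrow> 0"
    using tendsto_divide_zero[OF lim] .
  show "eventually (\<lambda>n. measure (M n) {w \<in> space (M n). e \<le> (\<Sum>i<n. of_bool (P n i w)) / n}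
          \<le> measure (M n) {w \<in> space (M n). P n 0 w} / e) sequentially"
    using eventually_gt_at_top[of 0]
  proof eventually_elim
    case (elim n)
    interpret prob_space "M n" by (rule prob)
    show ?case
      by (rule prob_frequency_ge_le[where P="P n", OF events same_prob elim \<open>e > 0\<close>])
  qed
qed simp

lemma conv_prob_zeroI_cover:
  fixes M :: "nat \<Rightarrow> 'a measure" and Z :: "nat \<Rightarrow> 'a \<Rightarrow> real"
  assumes prob: "\<And>n. prob_space (M n)"
    and sets: "\<And>n. E n \<in> sets (M n)" "\<And>n. F n \<in> sets (M n)"
    and lim_E: "(\<lambda>n. measure (M n) (E n)) \<longlonglongrightarrow> 0"
    and lim_F: "(\<lambda>n. measure (M n) (F n)) \<longlonglongrightarrow> 0"
    and lim_b: "b \<longlonglongrightarrow> 0"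
    and bound: "\<And>n w. 0 < n \<Longrightarrow> w \<in> space (M n) \<Longrightarrow> w \<notin> E n \<Longrightarrow> w \<notin> F n \<Longrightarrow> \<bar>Z n w\<bar> \<le> b n"
  shows "conv_prob_zero M Z"
  unfolding conv_prob_zero_def
proof (intro allI impI)
  fix e :: real
  assume "e > 0"
  show "(\<lambda>n. measure (M n) {w \<in> space (M n). e < \<bar>Z n w\<bar>}) \<longlonglongrightarrow> 0"
  proof (rule tendsto_sandwich[OF _ _ tendsto_const])
    show "(\<lambda>n. measure (M n) (E n) + measure (M n) (F n)) \<longlonglongrightarrow> 0"
      using tendsto_add_zero[OF lim_E lim_F] .
    show "eventually (\<lambda>n. measure (M n) {w \<in> space (M n). e < \<bar>Z n w\<bar>}
            \<le> measure (M n) (E n) + measure (M n) (F n)) sequentially"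
      using order_tendstoD(2)[OF lim_b \<open>e > 0\<close>] eventually_gt_at_top[of 0]
    proof eventually_elim
      case (elim n)
      interpret prob_space "M n" by (rule prob)
      have "{w \<in> space (M n). e < \<bar>Z n w\<bar>} \<subseteq> E n \<union> F n"
        using bound[of n] elim by force
      then have "measure (M n) {w \<in> space (M n). e < \<bar>Z n w\<bar>} \<le> measure (M n) (E n \<union> F n)"
        using sets by (intro finite_measure_mono) auto
      also have "\<dots> \<le> measure (M n) (E n) + measure (M n) (F n)"
        using sets by (intro measure_Un_le) auto
      finally show ?case .
    qed
  qed simp
qed

lemma delta_ind_without_outlier_le:
  "delta_ind x 0 e c beta \<le> delta_ind x a e c beta + of_bool (a \<noteq> 0)"
  by (simp add: delta_ind_def)

lemma pihat_uc_without_outliers_le: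
  "pihat_uc X (\<lambda>_ _ _. 0) xi C beta n w
     \<le> pihat_uc X alpha xi C beta n w + (\<Sum>i<n. of_bool (alpha n i w \<noteq> 0)) / n"
  unfolding pihat_uc_def add_divide_distrib[symmetric] sum.distrib[symmetric]
  by (intro divide_right_mono sum_mono delta_ind_without_outlier_le) simp

lemma pi_uc_eq_expectation:
  assumes "prob_space (M n)"
    and [measurable]: "X n 0 \<in> borel_measurable (M n)" "xi n 0 \<in> borel_measurable (M n)"
      "C n 0 \<in> borel_measurable (M n)"
  shows "pi_uc M X xi C beta n = (\<integral>w. delta_ind (X n 0 w) 0 (xi n 0 w) (C n 0 w) beta \<partial>M n)"
proof -
  interpret prob_space "M n" by fact
  have "(\<integral>w. delta_ind (X n 0 w) 0 (xi n 0 w) (C n 0 w) beta \<partial>M n)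
      = expectation (indicator {w \<in> space (M n). X n 0 w \<bullet> beta + xi n 0 w \<le> C n 0 w})"
    by (intro Bochner_Integration.integral_cong) (auto simp: delta_ind_def indicator_def)
  then show ?thesis
    by (simp add: pi_uc_def)
qed

lemma powr_ratio_le_powr_neg_half:
  fixes x l p q :: real
  assumes "1 \<le> x" "p - q \<le> l"
  shows "x powr (l - q / 2) / x powr (2 * l - p / 2) \<le> x powr (- l / 2)"
proof -
  have "x powr (l - q / 2) / x powr (2 * l - p / 2) = x powr ((l - q / 2) - (2 * l - p / 2))"
    by (simp only: powr_diff)
  also have "\<dots> \<le> x powr (- l / 2)"
    using assms by (intro powr_mono) auto
  finally show ?thesis .
qed

lemma pihat_uc_powr_ratio_le:
  assumes "0 < n"
    and deviation: "\<bar>pihat_uc X (\<lambda>_ _ _. 0) xi C beta n w - p\<bar> < l / 2"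
    and outliers: "(\<Sum>i<n. of_bool (alpha n i w \<noteq> 0)) / n < l / 2"
  shows "\<bar>real n powr (l - pihat_uc X alpha xi C beta n w / 2) / real n powr (2 * l - p / 2)\<bar>
           \<le> real n powr (- l / 2)"
proof -
  have "p - pihat_uc X alpha xi C beta n w \<le> l"
    using deviation outliers pihat_uc_without_outliers_le[of X xi C beta n w alpha] by linarith
  then have "real n powr (l - pihat_uc X alpha xi C beta n w / 2) / real n powr (2 * l - p / 2)
      \<le> real n powr (- l / 2)"
    using \<open>0 < n\<close> by (intro powr_ratio_le_powr_neg_half) auto
  then show ?thesis
    by simp
qed

lemma pihat_uc_without_outliers_consistent:
  fixes M :: "nat \<Rightarrow> 'a measure" and X :: "nat \<Rightarrow> nat \<Rightarrow> 'a \<Rightarrow> real ^ 'p"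
    and xi C :: "nat \<Rightarrow> nat \<Rightarrow> 'a \<Rightarrow> real"
  assumes prob: "\<And>n. prob_space (M n)"
    and [measurable]: "\<And>n i. X n i \<in> borel_measurable (M n)"
      "\<And>n i. xi n i \<in> borel_measurable (M n)" "\<And>n i. C n i \<in> borel_measurable (M n)"
    and indep: "\<And>n. prob_space.indep_vars (M n) (\<lambda>i. borel)
                  (\<lambda>i w. (C n i w, X n i w, xi n i w)) {..<n}"
    and ident: "\<And>n i. i < n \<Longrightarrow>
          distr (M n) borel (\<lambda>w. (C n i w, X n i w, xi n i w))
        = distr (M n) borel (\<lambda>w. (C n 0 w, X n 0 w, xi n 0 w))"
    and "e > 0"
  shows "(\<lambda>n. measure (M n) {w \<in> space (M n).
           e \<le> \<bar>pihat_uc X (\<lambda>_ _ _. 0) xi C beta n w - pi_uc M X xi C beta n\<bar>}) \<longlonglongrightarrow> 0"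
proof -
  define f :: "real \<times> (real ^ 'p) \<times> real \<Rightarrow> real"
    where "f z = delta_ind (fst (snd z)) 0 (snd (snd z)) (fst z) beta" for z
  have "f \<in> borel_measurable (borel \<Otimes>\<^sub>M borel \<Otimes>\<^sub>M borel)"
    unfolding f_def delta_ind_def by measurable
  then have f_meas: "f \<in> borel_measurable borel"
    by (simp add: borel_prod)
  have f_range: "0 \<le> f z \<and> f z \<le> 1" for z
    by (simp add: f_def delta_ind_def)
  have "(\<lambda>w. (C n i w, X n i w, xi n i w)) \<in> M n \<rightarrow>\<^sub>M borel" for n i
    by (simp flip: borel_prod)
  then show ?thesis
    using weak_law_triangular_array[OF prob indep _ ident f_meas f_range \<open>e > 0\<close>]
    by (simp add: f_def pihat_uc_def pi_uc_eq_expectation prob)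
qed

theorem lemma8:
  fixes M :: "nat \<Rightarrow> 'a measure"
    and X :: "nat \<Rightarrow> nat \<Rightarrow> 'a \<Rightarrow> real ^ 'p"
    and xi alpha C :: "nat \<Rightarrow> nat \<Rightarrow> 'a \<Rightarrow> real"
    and beta :: "real ^ 'p"
    and Q :: "((real ^ 'p) \<times> real) measure"
    and lambda0 :: real
  assumes prob: "\<And>n. prob_space (M n)"
    and measX: "\<And>n i. X n i \<in> borel_measurable (M n)"
    and measxi: "\<And>n i. xi n i \<in> borel_measurable (M n)"
    and measalpha: "\<And>n i. alpha n i \<in> borel_measurable (M n)"
    and measC: "\<And>n i. C n i \<in> borel_measurable (M n)"
    and A1_indep: "\<And>n. prob_space.indep_vars (M n) (\<lambda>i. borel)
                     (\<lambda>i w. (C n i w, X n i w, xi n i w)) {..<n}"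
    and A1_ident: "\<And>n i. i < n \<Longrightarrow>
          distr (M n) borel (\<lambda>w. (C n i w, X n i w, xi n i w))
        = distr (M n) borel (\<lambda>w. (C n 0 w, X n 0 w, xi n 0 w))"
    and Xxi_law: "\<And>n i. i < n \<Longrightarrow> distr (M n) borel (\<lambda>w. (X n i w, xi n i w)) = Q"
    and alpha_law: "\<And>n i. i < n \<Longrightarrow>
          measure (M n) {w \<in> space (M n). alpha n i w \<noteq> 0}
        = measure (M n) {w \<in> space (M n). alpha n 0 w \<noteq> 0}"
    and A1_ii: "\<And>n i j. i < n \<Longrightarrow>
          integrable (M n) (\<lambda>w. X n i w $ j * xi n i w)
        \<and> (\<integral>w. X n i w $ j * xi n i w \<partial>M n) = 0"
    and A1_iii_int: "\<And>n i j k. i < n \<Longrightarrow> integrable (M n) (\<lambda>w. X n i w $ j * X n i w $ k)"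
    and A1_iii_pd: "\<And>n i v. i < n \<Longrightarrow> v \<noteq> 0 \<Longrightarrow>
          v \<bullet> ((\<chi> j k. \<integral>w. X n i w $ j * X n i w $ k \<partial>M n) *v v) > 0"
    and A1_iv: "\<And>t. t > 0 \<Longrightarrow>
          little_oP M (\<lambda>n w. MAX i\<in>{..<n}. \<bar>xi n i w\<bar>) (\<lambda>n. real n powr t)"
    and lambda0_pos: "lambda0 > 0"
    and pi_alpha_lim: "pi_alpha M alpha \<longlonglongrightarrow> 0"
  shows "little_oP M
           (\<lambda>n w. real n powr (lambda0 - pihat_uc X alpha xi C beta n w / 2))
           (\<lambda>n. real n powr (2 * lambda0 - pi_uc M X xi C beta n / 2))"
proof -
  note [measurable] = measX measxi measalpha measC
  define Dev where "Dev n = {w \<in> space (M n).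
    lambda0 / 2 \<le> \<bar>pihat_uc X (\<lambda>_ _ _. 0) xi C beta n w - pi_uc M X xi C beta n\<bar>}" for n
  define Out where "Out n = {w \<in> space (M n).
    lambda0 / 2 \<le> (\<Sum>i<n. of_bool (alpha n i w \<noteq> 0)) / n}" for n
  have Dev_sets: "Dev n \<in> sets (M n)" and Out_sets: "Out n \<in> sets (M n)" for n
    unfolding Dev_def Out_def pihat_uc_def delta_ind_def by measurable
  have Dev_lim: "(\<lambda>n. measure (M n) (Dev n)) \<longlonglongrightarrow> 0"
    unfolding Dev_def using lambda0_pos
    by (intro pihat_uc_without_outliers_consistent[OF prob measX measxi measC A1_indep A1_ident]) auto
  have Out_lim: "(\<lambda>n. measure (M n) (Out n)) \<longlonglongrightarrow> 0"
    unfolding Out_def using lambda0_pos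
    by (intro frequency_tendsto_zero_in_probability[where P = "\<lambda>n i w. alpha n i w \<noteq> 0",
          OF prob _ alpha_law pi_alpha_lim[unfolded pi_alpha_def]]) auto
  have rate_lim: "(\<lambda>n. real n powr (- lambda0 / 2)) \<longlonglongrightarrow> 0"
    using lambda0_pos by (intro tendsto_neg_powr filterlim_real_sequentially) simp
  show ?thesis
    unfolding little_oP_def
  proof (rule conv_prob_zeroI_cover[OF prob Dev_sets Out_sets Dev_lim Out_lim rate_lim])
    fix n w
    assume "0 < n" "w \<in> space (M n)" "w \<notin> Dev n" "w \<notin> Out n"
    then show "\<bar>real n powr (lambda0 - pihat_uc X alpha xi C beta n w / 2)
              / real n powr (2 * lambda0 - pi_uc M X xi C beta n / 2)\<bar> \<le> real n powr (- lambda0 / 2)"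
      by (intro pihat_uc_powr_ratio_le) (auto simp: Dev_def Out_def)
  qed
qed

end
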